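(* Let $L$ be a finite $\mathcal{L}$-lattice with $|L|\le n$. Then $L$ has the interpolation property iff every valid $a\le b$ with at most $n$ left variables has an interpolant, i.e. a formula $i$ whose variables are all intersection variables of $a,b$ such that $a\le i$ and $i\le b$ are valid.
   Context: A lattice-oriented signature $\mathcal{L}$ is a finite set of connectives. Each connective $c$ has an arity $n_c\in\mathbb{N}$ and a polarity $p_c:\{1,\dots,n_c\}\to\{-,+\}$. The signature contains binary connectives $\lor,\land,\to$ with $p_\lor(1)=p_\lor(2)=p_\land(1)=p_\land(2)=+$, $p_\to(1)=-$ and $p_\to(2)=+$; nullary connectives are truth constants. A finite $\mathcal{L}$-lattice is a finite set $L$ together with an $n_c$-ary operation $c^L$ on $L$ for each connective $c$, such that: - $(L,\lor^L,\land^L)$ is a lattice, with order $x\le y$ iff $x\land y=x$; its top element is denoted $1$; - $c^L$ is monotone in every argument $i$ with $p_c(i)=+$ and antitone in every argument $i$ with $p_c(i)=-$; - for all $a,b\in L$: $1\le a\to^L b$ iff $a\le b$. Formulas (words) are built from propositional variables using the connectives. A valuation assigns elements of $L$ to the variables and extends to all formulas via the operations $c^L$. For formulas $a,b$, "$a\le b$ is valid" means that the value of $a$ is $\le$ the value of $b$ under every valuation. For a valid $a\le b$, the variables occurring only in $a$ are the left variables, those occurring only in $b$ are the right variables, and those occurring in both are the intersection variables. $L$ has the interpolation property iff for all formulas $a,b$ with $a\le b$ valid there is a formula $i$ whose variables are all intersection variables of $a,b$ such that $a\le i$ and $i\le b$ are valid. If there are no intersection variables, $i$ must be a closed formula. 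*)

theory Defs
  imports Main
begin

(* Lattice-oriented signature. Polarity: pol c i = True means '+', False means '-'.
   Argument positions are 0-indexed (position i here = position i+1 in the paper). *)
record 'c signature =
  conns :: "'c set"
  arity :: "'c \<Rightarrow> nat"
  pol   :: "'c \<Rightarrow> nat \<Rightarrow> bool"
  jn    :: 'c
  mt    :: 'c
  im    :: 'c

definition lattice_signature :: "'c signature \<Rightarrow> bool" where
  "lattice_signature S \<longleftrightarrow>
     finite (conns S) \<and>
     jn S \<in> conns S \<and> mt S \<in> conns S \<and> im S \<in> conns S \<and>
     jn S \<noteq> mt S \<and> jn S \<noteq> im S \<and> mt S \<noteq> im S \<and>
     arity S (jn S) = 2 \<and> arity S (mt S) = 2 \<and> arity S (im S) = 2 \<and>
     pol S (jn S) 0 \<and> pol S (jn S) 1 \<and> pol S (mt S) 0 \<and> pol S (mt S) 1 \<and>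
     \<not> pol S (im S) 0 \<and> pol S (im S) 1"

datatype 'c form = Var nat | App 'c "'c form list"

fun wf_form :: "'c signature \<Rightarrow> 'c form \<Rightarrow> bool" where
  "wf_form S (Var x) = True"
| "wf_form S (App c ts) \<longleftrightarrow> c \<in> conns S \<and> length ts = arity S c \<and> (\<forall>t\<in>set ts. wf_form S t)"

fun vars :: "'c form \<Rightarrow> nat set" where
  "vars (Var x) = {x}"
| "vars (App c ts) = \<Union> (vars ` set ts)"

fun eval :: "('c \<Rightarrow> 'a list \<Rightarrow> 'a) \<Rightarrow> (nat \<Rightarrow> 'a) \<Rightarrow> 'c form \<Rightarrow> 'a" where
  "eval ops v (Var x) = v x"
| "eval ops v (App c ts) = ops c (map (eval ops v) ts)"

definition lle :: "'c signature \<Rightarrow> ('c \<Rightarrow> 'a list \<Rightarrow> 'a) \<Rightarrow> 'a \<Rightarrow> 'a \<Rightarrow> bool" where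
  "lle S ops x y \<longleftrightarrow> ops (mt S) [x, y] = x"

definition finite_L_lattice ::
  "'c signature \<Rightarrow> 'a set \<Rightarrow> ('c \<Rightarrow> 'a list \<Rightarrow> 'a) \<Rightarrow> bool" where
  "finite_L_lattice S L ops \<longleftrightarrow>
     finite L \<and>
     (\<forall>c\<in>conns S. \<forall>xs. length xs = arity S c \<and> set xs \<subseteq> L \<longrightarrow> ops c xs \<in> L) \<and>
     (let j = (\<lambda>x y. ops (jn S) [x, y]); m = (\<lambda>x y. ops (mt S) [x, y]) in
       (\<forall>x\<in>L. \<forall>y\<in>L. j x y = j y x \<and> m x y = m y x) \<and>
       (\<forall>x\<in>L. \<forall>y\<in>L. \<forall>z\<in>L. j (j x y) z = j x (j y z) \<and> m (m x y) z = m x (m y z)) \<and>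
       (\<forall>x\<in>L. \<forall>y\<in>L. j x (m x y) = x \<and> m x (j x y) = x)) \<and>
     (\<forall>c\<in>conns S. \<forall>xs i y. length xs = arity S c \<and> set xs \<subseteq> L \<and> i < arity S c \<and> y \<in> L
        \<and> lle S ops (xs ! i) y \<longrightarrow>
        (if pol S c i then lle S ops (ops c xs) (ops c (xs[i := y]))
         else lle S ops (ops c (xs[i := y])) (ops c xs))) \<and>
     (\<exists>t\<in>L. (\<forall>x\<in>L. lle S ops x t) \<and>
        (\<forall>a\<in>L. \<forall>b\<in>L. lle S ops t (ops (im S) [a, b]) \<longleftrightarrow> lle S ops a b))"

definition valid_le ::
  "'c signature \<Rightarrow> 'a set \<Rightarrow> ('c \<Rightarrow> 'a list \<Rightarrow> 'a) \<Rightarrow> 'c form \<Rightarrow> 'c form \<Rightarrow> bool" where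
  "valid_le S L ops a b \<longleftrightarrow>
     (\<forall>v. (\<forall>x. v x \<in> L) \<longrightarrow> lle S ops (eval ops v a) (eval ops v b))"

definition left_vars :: "'c form \<Rightarrow> 'c form \<Rightarrow> nat set" where
  "left_vars a b = vars a - vars b"

definition inter_vars :: "'c form \<Rightarrow> 'c form \<Rightarrow> nat set" where
  "inter_vars a b = vars a \<inter> vars b"

definition is_interpolant ::
  "'c signature \<Rightarrow> 'a set \<Rightarrow> ('c \<Rightarrow> 'a list \<Rightarrow> 'a) \<Rightarrow> 'c form \<Rightarrow> 'c form \<Rightarrow> 'c form \<Rightarrow> bool" where
  "is_interpolant S L ops a b i \<longleftrightarrow>
     wf_form S i \<and> vars i \<subseteq> inter_vars a b \<and> valid_le S L ops a i \<and> valid_le S L ops i b"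

definition interpolation_property ::
  "'c signature \<Rightarrow> 'a set \<Rightarrow> ('c \<Rightarrow> 'a list \<Rightarrow> 'a) \<Rightarrow> bool" where
  "interpolation_property S L ops \<longleftrightarrow>
     (\<forall>a b. wf_form S a \<and> wf_form S b \<and> valid_le S L ops a b \<longrightarrow>
        (\<exists>i. is_interpolant S L ops a b i))"

end

theory Submission
  imports Defs
begin

text \<open>Given a valid \<open>a \<le> b\<close>, let \<open>Y\<close> be a block of \<open>|L|\<close> fresh variables and let \<open>a'\<close> be the join of
  all copies of \<open>a\<close> in which the left variables are renamed into \<open>Y\<close>. Every copy lies below \<open>b\<close>, so
  \<open>a' \<le> b\<close> is valid and has at most \<open>|L|\<close> left variables; hence it has an interpolant \<open>i\<close>, which
  only uses variables of \<open>b\<close>. Conversely \<open>a \<le> i\<close> is valid: under any valuation the values of the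
  left variables of \<open>a\<close> can be encoded by the variables of \<open>Y\<close>, so \<open>a\<close> takes the value of one of
  the copies, which lies below \<open>a'\<close> and hence below \<open>i\<close>.\<close>

fun ren :: "(nat \<Rightarrow> nat) \<Rightarrow> 'c form \<Rightarrow> 'c form" where
  "ren f (Var x) = Var (f x)"
| "ren f (App c ts) = App c (map (ren f) ts)"

text \<open>The value on the empty list is junk; \<open>join_list\<close> is only used on nonempty lists.\<close>

fun join_list :: "'c \<Rightarrow> 'c form list \<Rightarrow> 'c form" where
  "join_list c [] = Var 0"
| "join_list c [t] = t"
| "join_list c (t # ts) = App c [t, join_list c ts]"

definition renamings_into :: "nat set \<Rightarrow> nat set \<Rightarrow> (nat \<Rightarrow> nat) set" where
  "renamings_into X Y = {f. \<forall>x. (x \<in> X \<longrightarrow> f x \<in> Y) \<and> (x \<notin> X \<longrightarrow> f x = x)}"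

lemma eval_ren: "eval ops v (ren f t) = eval ops (v \<circ> f) t"
  by (induction t) (simp_all add: comp_def cong: map_cong)

lemma vars_ren: "vars (ren f t) = f ` vars t"
  by (induction t) auto

lemma wf_form_ren: "wf_form S t \<Longrightarrow> wf_form S (ren f t)"
  by (induction t) auto

lemma finite_vars: "finite (vars t)"
  by (induction t) auto

lemma eval_cong: "(\<And>x. x \<in> vars t \<Longrightarrow> v x = w x) \<Longrightarrow> eval ops v t = eval ops w t"
proof (induction t)
  case (App c ts)
  then have "map (eval ops v) ts = map (eval ops w) ts" by auto
  then show ?case by (simp only: eval.simps)
qed simp

lemma vars_join_list: "ts \<noteq> [] \<Longrightarrow> vars (join_list c ts) = \<Union> (vars ` set ts)"
  by (induction c ts rule: join_list.induct) auto

lemma finite_renamings_into: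
  assumes "finite X" "finite Y"
  shows "finite (renamings_into X Y)"
proof -
  let ?extend = "\<lambda>g x. if x \<in> X then g x else x"
  have "renamings_into X Y \<subseteq> ?extend ` {g. \<forall>x. (x \<in> X \<longrightarrow> g x \<in> Y) \<and> (x \<notin> X \<longrightarrow> g x = 0)}"
  proof
    fix f assume f: "f \<in> renamings_into X Y"
    then have "f = ?extend (\<lambda>x. if x \<in> X then f x else 0)"
      by (auto simp: renamings_into_def)
    then show "f \<in> ?extend ` {g. \<forall>x. (x \<in> X \<longrightarrow> g x \<in> Y) \<and> (x \<notin> X \<longrightarrow> g x = 0)}"
      using f by (auto simp: renamings_into_def)
  qed
  then show ?thesis
    by (rule finite_subset) (intro finite_imageI finite_set_of_finite_funs assms)
qed

lemma vars_ren_renamings_into: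
  assumes "f \<in> renamings_into X Y"
  shows "vars (ren f t) \<subseteq> Y \<union> (vars t - X)"
proof
  fix y assume "y \<in> vars (ren f t)"
  then obtain x where "x \<in> vars t" "y = f x" by (auto simp: vars_ren)
  then show "y \<in> Y \<union> (vars t - X)"
    using assms by (cases "x \<in> X") (auto simp: renamings_into_def)
qed

lemma encode_valuation:
  assumes "bij_betw h Y L" "\<forall>x. v x \<in> L"
  obtains f w where "f \<in> renamings_into X Y" "\<forall>y. w y \<in> L"
    "\<forall>x\<in>X. w (f x) = v x" "\<forall>y. y \<notin> Y \<longrightarrow> w y = v y"
proof
  let ?code = "inv_into Y h"
  show "(\<lambda>x. if x \<in> X then ?code (v x) else x) \<in> renamings_into X Y"
    using assms by (auto simp: renamings_into_def bij_betw_def inv_into_into)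
  show "\<forall>y. (if y \<in> Y then h y else v y) \<in> L"
    using assms by (auto simp: bij_betw_def)
  show "\<forall>x\<in>X. (\<lambda>y. if y \<in> Y then h y else v y) (if x \<in> X then ?code (v x) else x) = v x"
    using assms by (auto simp: bij_betw_def f_inv_into_f inv_into_into)
qed simp

lemma renamings_into_cover:
  assumes "bij_betw h Y L" "Y \<inter> vars b = {}" "\<forall>x. v x \<in> L"
  shows "\<exists>f\<in>renamings_into (left_vars a b) Y. \<exists>w. (\<forall>y. w y \<in> L) \<and>
           (\<forall>x\<in>vars a. w (f x) = v x) \<and> (\<forall>x\<in>vars b. w x = v x)"
proof -
  obtain f w where f: "f \<in> renamings_into (left_vars a b) Y" and w: "\<forall>y. w y \<in> L"
    and left: "\<forall>x\<in>left_vars a b. w (f x) = v x" and outside: "\<forall>y. y \<notin> Y \<longrightarrow> w y = v y"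
    using encode_valuation[OF assms(1,3)] by blast
  have "w (f x) = v x" if "x \<in> vars a" for x
  proof (cases "x \<in> left_vars a b")
    case False
    then have "x \<in> vars b" "f x = x"
      using that f by (auto simp: left_vars_def renamings_into_def)
    then show ?thesis using outside assms(2) by auto
  qed (use left in simp)
  moreover have "\<forall>x\<in>vars b. w x = v x" using outside assms(2) by auto
  ultimately show ?thesis using f w by blast
qed

lemma vars_join_renamings_into:
  assumes "fs \<noteq> []" "set fs \<subseteq> renamings_into (left_vars a b) Y"
  shows "vars (join_list c (map (\<lambda>f. ren f a) fs)) \<subseteq> Y \<union> inter_vars a b"
proof
  fix y assume "y \<in> vars (join_list c (map (\<lambda>f. ren f a) fs))"
  then obtain f where "f \<in> set fs" "y \<in> vars (ren f a)"
    using vars_join_list[of "map (\<lambda>f. ren f a) fs"] assms(1) by auto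
  then show "y \<in> Y \<union> inter_vars a b"
    using assms(2) vars_ren_renamings_into[of f "left_vars a b" Y a]
    by (auto simp: left_vars_def inter_vars_def)
qed

lemma valid_le_ren_left:
  fixes L :: "'a set"
  assumes "valid_le S L ops a b" "\<forall>x\<in>vars b. f x = x"
  shows "valid_le S L ops (ren f a) b"
  unfolding valid_le_def
proof (intro allI impI)
  fix v :: "nat \<Rightarrow> 'a" assume v: "\<forall>x. v x \<in> L"
  have "eval ops (v \<circ> f) b = eval ops v b"
    by (rule eval_cong) (use assms(2) in simp)
  moreover have "lle S ops (eval ops (v \<circ> f) a) (eval ops (v \<circ> f) b)"
    using assms(1) v by (simp add: valid_le_def)
  ultimately show "lle S ops (eval ops v (ren f a)) (eval ops v b)"
    by (simp add: eval_ren)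
qed

lemma valid_le_of_renamed_instances:
  fixes L :: "'a set"
  assumes instances: "\<And>f. f \<in> F \<Longrightarrow> valid_le S L ops (ren f a) c"
    and cover: "\<And>v. \<forall>x. v x \<in> L \<Longrightarrow> \<exists>f\<in>F. \<exists>w. (\<forall>y. w y \<in> L) \<and>
                    (\<forall>x\<in>vars a. w (f x) = v x) \<and> (\<forall>x\<in>vars c. w x = v x)"
  shows "valid_le S L ops a c"
  unfolding valid_le_def
proof (intro allI impI)
  fix v :: "nat \<Rightarrow> 'a" assume "\<forall>x. v x \<in> L"
  then obtain f w where f: "f \<in> F" and w: "\<forall>y. w y \<in> L"
    and on_a: "\<forall>x\<in>vars a. w (f x) = v x" and on_c: "\<forall>x\<in>vars c. w x = v x"
    using cover by blast
  have "eval ops v a = eval ops (w \<circ> f) a"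
    by (rule eval_cong) (use on_a in simp)
  then have "eval ops v a = eval ops w (ren f a)"
    by (simp add: eval_ren)
  moreover have "eval ops v c = eval ops w c"
    by (rule eval_cong) (use on_c in simp)
  ultimately show "lle S ops (eval ops v a) (eval ops v c)"
    using instances[OF f] w by (simp add: valid_le_def)
qed

locale L_lattice =
  fixes S :: "'c signature" and L :: "'a set" and ops :: "'c \<Rightarrow> 'a list \<Rightarrow> 'a"
  assumes signature: "lattice_signature S" and lattice: "finite_L_lattice S L ops"
begin

abbreviation "J x y \<equiv> ops (jn S) [x, y]"
abbreviation "M x y \<equiv> ops (mt S) [x, y]"

lemma finite_carrier: "finite L"
  using lattice unfolding finite_L_lattice_def by blast

lemma carrier_nonempty: "L \<noteq> {}"
  using lattice unfolding finite_L_lattice_def by blast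

lemma ops_in_carrier: "c \<in> conns S \<Longrightarrow> length xs = arity S c \<Longrightarrow> set xs \<subseteq> L \<Longrightarrow> ops c xs \<in> L"
  using lattice unfolding finite_L_lattice_def by blast

lemma eval_in_carrier: "\<forall>x. v x \<in> L \<Longrightarrow> wf_form S t \<Longrightarrow> eval ops v t \<in> L"
  by (induction t) (auto intro!: ops_in_carrier)

lemma join_in_carrier: "x \<in> L \<Longrightarrow> y \<in> L \<Longrightarrow> J x y \<in> L"
  using signature by (auto simp: lattice_signature_def intro!: ops_in_carrier)

lemma join_commute: "x \<in> L \<Longrightarrow> y \<in> L \<Longrightarrow> J x y = J y x"
  using lattice unfolding finite_L_lattice_def Let_def by blast

lemma join_assoc: "x \<in> L \<Longrightarrow> y \<in> L \<Longrightarrow> z \<in> L \<Longrightarrow> J (J x y) z = J x (J y z)"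
  using lattice unfolding finite_L_lattice_def Let_def by blast

lemma meet_assoc: "x \<in> L \<Longrightarrow> y \<in> L \<Longrightarrow> z \<in> L \<Longrightarrow> M (M x y) z = M x (M y z)"
  using lattice unfolding finite_L_lattice_def Let_def by blast

lemma meet_commute: "x \<in> L \<Longrightarrow> y \<in> L \<Longrightarrow> M x y = M y x"
  using lattice unfolding finite_L_lattice_def Let_def by blast

lemma absorb: "x \<in> L \<Longrightarrow> y \<in> L \<Longrightarrow> J x (M x y) = x \<and> M x (J x y) = x"
  using lattice unfolding finite_L_lattice_def Let_def by blast

lemma lle_trans: "x \<in> L \<Longrightarrow> y \<in> L \<Longrightarrow> z \<in> L \<Longrightarrow> lle S ops x y \<Longrightarrow> lle S ops y z \<Longrightarrow> lle S ops x z"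
  unfolding lle_def using meet_assoc[of x y z] by simp

lemma lle_iff_join_eq:
  assumes "x \<in> L" "z \<in> L"
  shows "lle S ops x z \<longleftrightarrow> J x z = z"
  unfolding lle_def
proof
  assume "M x z = x"
  then have "J z x = z" using absorb[OF assms(2,1)] meet_commute[OF assms] by simp
  then show "J x z = z" using join_commute[OF assms] by simp
next
  assume "J x z = z"
  then show "M x z = x" using absorb[OF assms] by simp
qed

lemma join_lle_iff:
  assumes "x \<in> L" "y \<in> L" "z \<in> L"
  shows "lle S ops (J x y) z \<longleftrightarrow> lle S ops x z \<and> lle S ops y z"
proof -
  have xy: "J x y \<in> L" using assms join_in_carrier by simp
  show ?thesis
  proof
    assume "lle S ops (J x y) z"
    moreover have "lle S ops x (J x y)" using assms absorb unfolding lle_def by simp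
    moreover have "lle S ops y (J x y)" using assms absorb join_commute unfolding lle_def by metis
    ultimately show "lle S ops x z \<and> lle S ops y z"
      using assms xy lle_trans by blast
  next
    assume "lle S ops x z \<and> lle S ops y z"
    then have "J x z = z" "J y z = z" using assms lle_iff_join_eq by auto
    then have "J (J x y) z = z" using assms join_assoc by simp
    then show "lle S ops (J x y) z"
      using lle_iff_join_eq[OF xy assms(3)] by simp
  qed
qed

lemma eval_join_list_lle_iff:
  assumes "\<forall>x. v x \<in> L" "z \<in> L" "ts \<noteq> []" "\<forall>t\<in>set ts. wf_form S t"
  shows "eval ops v (join_list (jn S) ts) \<in> L \<and>
    (lle S ops (eval ops v (join_list (jn S) ts)) z \<longleftrightarrow> (\<forall>t\<in>set ts. lle S ops (eval ops v t) z))"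
  using assms(3,4)
proof (induction "jn S" ts rule: join_list.induct)
  case (3 t u us)
  let ?r = "eval ops v (join_list (jn S) (u # us))"
  have r: "?r \<in> L" "lle S ops ?r z \<longleftrightarrow> (\<forall>s\<in>set (u # us). lle S ops (eval ops v s) z)"
    using 3 by auto
  have t: "eval ops v t \<in> L" using 3 assms(1) eval_in_carrier by simp
  show ?case
    using join_in_carrier[OF t r(1)] join_lle_iff[OF t r(1) assms(2)] r(2) by simp
qed (use assms(1) eval_in_carrier in simp_all)

lemma wf_form_join_list: "ts \<noteq> [] \<Longrightarrow> \<forall>t\<in>set ts. wf_form S t \<Longrightarrow> wf_form S (join_list (jn S) ts)"
  by (induction "jn S" ts rule: join_list.induct)
    (use signature in \<open>auto simp: lattice_signature_def\<close>)

lemma valid_le_join_list_iff: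
  assumes "ts \<noteq> []" "\<forall>t\<in>set ts. wf_form S t" "wf_form S c"
  shows "valid_le S L ops (join_list (jn S) ts) c \<longleftrightarrow> (\<forall>t\<in>set ts. valid_le S L ops t c)"
  using eval_join_list_lle_iff[OF _ eval_in_carrier assms(1,2)] assms(3)
  unfolding valid_le_def by blast

lemma fresh_coding_block:
  obtains Y where "Y \<inter> vars b = {}" "finite Y" "card Y = card L"
    "\<And>v. \<forall>x. v x \<in> L \<Longrightarrow> \<exists>f\<in>renamings_into (left_vars a b) Y. \<exists>w. (\<forall>y. w y \<in> L) \<and>
            (\<forall>x\<in>vars a. w (f x) = v x) \<and> (\<forall>x\<in>vars b. w x = v x)"
proof -
  obtain N where "\<forall>x\<in>vars b. x < N"
    using finite_vars finite_nat_set_iff_bounded by blast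
  then have fresh: "{N..<N + card L} \<inter> vars b = {}" by auto
  obtain h where "bij_betw h {N..<N + card L} L"
    using finite_same_card_bij[of "{N..<N + card L}" L] finite_carrier by auto
  from renamings_into_cover[OF this fresh] show thesis
    by (intro that[OF fresh]) simp_all
qed

lemma bounded_left_vars_reduction:
  assumes "wf_form S a" "wf_form S b" "valid_le S L ops a b"
  obtains a' where "wf_form S a'" "valid_le S L ops a' b" "card (left_vars a' b) \<le> card L"
    "\<And>i. is_interpolant S L ops a' b i \<Longrightarrow> is_interpolant S L ops a b i"
proof -
  obtain Y where Y_fresh: "Y \<inter> vars b = {}" and "finite Y" "card Y = card L"
    and cover: "\<And>v. \<forall>x. v x \<in> L \<Longrightarrow> \<exists>f\<in>renamings_into (left_vars a b) Y. \<exists>w. (\<forall>y. w y \<in> L) \<and>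
                      (\<forall>x\<in>vars a. w (f x) = v x) \<and> (\<forall>x\<in>vars b. w x = v x)"
    using fresh_coding_block[where a = a and b = b] by blast
  define F where "F = renamings_into (left_vars a b) Y"
  have "finite F"
    unfolding F_def left_vars_def using \<open>finite Y\<close> by (intro finite_renamings_into) (simp_all add: finite_vars)
  then obtain fs where fs: "set fs = F" using finite_list by blast
  obtain e where "e \<in> L" using carrier_nonempty by blast
  then have "F \<noteq> {}" using cover[of "\<lambda>_. e"] by (auto simp: F_def)
  then have fs_ne: "map (\<lambda>f. ren f a) fs \<noteq> []" using fs by auto
  have fs_wf: "\<forall>t\<in>set (map (\<lambda>f. ren f a) fs). wf_form S t"
    using assms(1) wf_form_ren by auto
  define a' where "a' = join_list (jn S) (map (\<lambda>f. ren f a) fs)"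
  have "vars a' \<subseteq> Y \<union> inter_vars a b"
    unfolding a'_def using vars_join_renamings_into[of fs a b Y] fs fs_ne
    by (simp add: F_def)
  then have vars_a': "left_vars a' b \<subseteq> Y" "inter_vars a' b \<subseteq> inter_vars a b"
    using Y_fresh by (auto simp: left_vars_def inter_vars_def)
  show thesis
  proof
    show "wf_form S a'" unfolding a'_def using wf_form_join_list[OF fs_ne fs_wf] .
    have "valid_le S L ops (ren f a) b" if "f \<in> F" for f
      using valid_le_ren_left[OF assms(3)] that by (auto simp: F_def renamings_into_def left_vars_def)
    then show "valid_le S L ops a' b"
      unfolding a'_def using valid_le_join_list_iff[OF fs_ne fs_wf assms(2)] fs by auto
    show "card (left_vars a' b) \<le> card L"
      using card_mono[OF \<open>finite Y\<close> vars_a'(1)] \<open>card Y = card L\<close> by simp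
  next
    fix i assume i: "is_interpolant S L ops a' b i"
    then have i_wf: "wf_form S i" and i_vars: "vars i \<subseteq> vars b"
      by (auto simp: is_interpolant_def inter_vars_def)
    have "valid_le S L ops (ren f a) i" if "f \<in> F" for f
      using i valid_le_join_list_iff[OF fs_ne fs_wf i_wf] that fs
      by (auto simp: is_interpolant_def a'_def)
    moreover have "\<exists>f\<in>F. \<exists>w. (\<forall>y. w y \<in> L) \<and> (\<forall>x\<in>vars a. w (f x) = v x) \<and> (\<forall>x\<in>vars i. w x = v x)"
      if "\<forall>x. v x \<in> L" for v
      using cover[OF that] i_vars unfolding F_def by blast
    ultimately have "valid_le S L ops a i"
      by (rule valid_le_of_renamed_instances)
    then show "is_interpolant S L ops a b i"
      using i vars_a'(2) by (auto simp: is_interpolant_def)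
  qed
qed

end

theorem lemma1:
  fixes S :: "'c signature" and L :: "'a set" and ops :: "'c \<Rightarrow> 'a list \<Rightarrow> 'a" and n :: nat
  assumes "lattice_signature S"
    and "finite_L_lattice S L ops"
    and "card L \<le> n"
  shows "interpolation_property S L ops \<longleftrightarrow>
    (\<forall>a b. wf_form S a \<and> wf_form S b \<and> valid_le S L ops a b \<and> card (left_vars a b) \<le> n \<longrightarrow>
       (\<exists>i. is_interpolant S L ops a b i))"
proof
  assume "interpolation_property S L ops"
  then show "\<forall>a b. wf_form S a \<and> wf_form S b \<and> valid_le S L ops a b \<and> card (left_vars a b) \<le> n \<longrightarrow>
       (\<exists>i. is_interpolant S L ops a b i)"
    unfolding interpolation_property_def by blast
next
  interpret L_lattice S L ops using assms(1,2) by unfold_locales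
  assume bounded: "\<forall>a b. wf_form S a \<and> wf_form S b \<and> valid_le S L ops a b \<and> card (left_vars a b) \<le> n \<longrightarrow>
       (\<exists>i. is_interpolant S L ops a b i)"
  show "interpolation_property S L ops"
    unfolding interpolation_property_def
  proof (intro allI impI, elim conjE)
    fix a b assume ab: "wf_form S a" "wf_form S b" "valid_le S L ops a b"
    then obtain a' where "wf_form S a'" "valid_le S L ops a' b" "card (left_vars a' b) \<le> card L"
      and transfer: "\<And>i. is_interpolant S L ops a' b i \<Longrightarrow> is_interpolant S L ops a b i"
      using bounded_left_vars_reduction by blast
    then obtain i where "is_interpolant S L ops a' b i"
      using bounded ab(2) assms(3) by fastforce
    then show "\<exists>i. is_interpolant S L ops a b i" using transfer by blast
  qed
qed

end
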